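(* Let $\mathcal{R}=(G_0,e\to R)$ be an expanding replacement system. Then its limit space $X=\Omega/\sim$ is a compact metrizable space.
   Context: A graph means a finite directed multigraph (loops, multiple edges allowed). A replacement system $\mathcal{R}=(G_0,e\to R)$: $G_0$ a graph, $e$ a non-loop directed edge from $v$ to $w$, $R$ a graph containing $v,w$ (initial and terminal vertices of $R$). Replacing an edge $\varepsilon$ of a graph means deleting it and gluing in a copy of $R$ with its initial/terminal vertices identified with the initial/terminal vertices of $\varepsilon$; new edges are named $\varepsilon\zeta$ ($\zeta\in E(R)$). The full expansion $G_n$ is obtained from $G_{n-1}$ by replacing every edge; edges of $G_n$ are words $\varepsilon_0\cdots\varepsilon_n$ with $\varepsilon_0\in E(G_0)$, $\varepsilon_i\in E(R)$. $\mathcal{R}$ is expanding if neither $G_0$ nor $R$ has isolated vertices, the initial and terminal vertices of $R$ are not joined by an edge, and $R$ has at least three vertices and two edges. The symbol space $\Omega=E(G_0)\times E(R)^{\mathbb{N}}$ has the product topology; $\varepsilon_0\varepsilon_1\cdots\sim\varepsilon_0'\varepsilon_1'\cdots$ iff for every $n$ the edges $\varepsilon_0\cdots\varepsilon_n$ and $\varepsilon_0'\cdots\varepsilon_n'$ of $G_n$ share at least one vertex (for expanding systems this is an equivalence relation), and $X=\Omega/\sim$ carries the quotient topology. *)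

theory Defs
  imports "HOL-Analysis.Analysis" "Graph_Theory.Digraph"
begin

text \<open>Graphs are finite directed multigraphs (loops and multiple arcs allowed), i.e.
  Graph_Theory pre_digraphs satisfying fin_digraph.\<close>

definition no_isolated_vertices :: "('a,'b) pre_digraph \<Rightarrow> bool" where
  "no_isolated_vertices G \<longleftrightarrow>
     (\<forall>x\<in>verts G. \<exists>a\<in>arcs G. tail G a = x \<or> head G a = x)"

text \<open>A replacement system (G0, e -> R): G0 a graph, R a graph with distinct initial
  vertex i and terminal vertex t (the endpoints of the non-loop edge e).\<close>
definition replacement_system ::
  "('v,'e) pre_digraph \<Rightarrow> ('w,'f) pre_digraph \<Rightarrow> 'w \<Rightarrow> 'w \<Rightarrow> bool" where
  "replacement_system G0 R i t \<longleftrightarrow>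
     fin_digraph G0 \<and> fin_digraph R \<and> i \<in> verts R \<and> t \<in> verts R \<and> i \<noteq> t"

definition expanding ::
  "('v,'e) pre_digraph \<Rightarrow> ('w,'f) pre_digraph \<Rightarrow> 'w \<Rightarrow> 'w \<Rightarrow> bool" where
  "expanding G0 R i t \<longleftrightarrow>
     replacement_system G0 R i t \<and>
     no_isolated_vertices G0 \<and> no_isolated_vertices R \<and>
     (\<forall>a\<in>arcs R. \<not> ((tail R a = i \<and> head R a = t) \<or> (tail R a = t \<and> head R a = i))) \<and>
     card (verts R) \<ge> 3 \<and> card (arcs R) \<ge> 2"

text \<open>Vertices of the full expansion G_n: vertices of G0, or a new vertex
  (p, x) created when the edge p (a word e0 e1 ... ek) is replaced, x an interior
  vertex of R (x different from i, t).\<close>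
datatype ('v,'e,'w,'f) xvert = Base 'v | New "'e \<times> 'f list" 'w

text \<open>Endpoints (tail, head) of the edge e0 e1 ... en of G_n; the list argument is the
  reversed word e_n ... e_1.\<close>
fun ends_rev ::
  "('v,'e) pre_digraph \<Rightarrow> ('w,'f) pre_digraph \<Rightarrow> 'w \<Rightarrow> 'w \<Rightarrow> 'e \<Rightarrow> 'f list
     \<Rightarrow> ('v,'e,'w,'f) xvert \<times> ('v,'e,'w,'f) xvert" where
  "ends_rev G0 R i t e0 [] = (Base (tail G0 e0), Base (head G0 e0))"
| "ends_rev G0 R i t e0 (z # rs) =
     (let p = ends_rev G0 R i t e0 rs;
          f = (\<lambda>x. if x = i then fst p else if x = t then snd p else New (e0, rev rs) x)
      in (f (tail R z), f (head R z)))"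

definition edge_vertices ::
  "('v,'e) pre_digraph \<Rightarrow> ('w,'f) pre_digraph \<Rightarrow> 'w \<Rightarrow> 'w \<Rightarrow> 'e \<Rightarrow> 'f list
     \<Rightarrow> ('v,'e,'w,'f) xvert set" where
  "edge_vertices G0 R i t e0 ws =
     (let p = ends_rev G0 R i t e0 (rev ws) in {fst p, snd p})"

definition symbol_space :: "('v,'e) pre_digraph \<Rightarrow> ('w,'f) pre_digraph \<Rightarrow> ('e \<times> (nat \<Rightarrow> 'f)) topology" where
  "symbol_space G0 R =
     prod_topology (discrete_topology (arcs G0))
                   (product_topology (\<lambda>_. discrete_topology (arcs R)) UNIV)"

definition gluing_rel ::
  "('v,'e) pre_digraph \<Rightarrow> ('w,'f) pre_digraph \<Rightarrow> 'w \<Rightarrow> 'w \<Rightarrow> (('e \<times> (nat \<Rightarrow> 'f)) \<times> ('e \<times> (nat \<Rightarrow> 'f))) set" where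
  "gluing_rel G0 R i t =
     {(a, b). a \<in> topspace (symbol_space G0 R) \<and> b \<in> topspace (symbol_space G0 R) \<and>
        (\<forall>n. edge_vertices G0 R i t (fst a) (map (snd a) [0..<n]) \<inter>
             edge_vertices G0 R i t (fst b) (map (snd b) [0..<n]) \<noteq> {})}"

definition quotient_topology :: "'a topology \<Rightarrow> ('a \<times> 'a) set \<Rightarrow> 'a set topology" where
  "quotient_topology X r =
     topology (\<lambda>U. U \<subseteq> topspace X // r \<and> openin X {x \<in> topspace X. r `` {x} \<in> U})"

definition limit_space ::
  "('v,'e) pre_digraph \<Rightarrow> ('w,'f) pre_digraph \<Rightarrow> 'w \<Rightarrow> 'w \<Rightarrow> ('e \<times> (nat \<Rightarrow> 'f)) set topology" where
  "limit_space G0 R i t = quotient_topology (symbol_space G0 R) (gluing_rel G0 R i t)"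

end

theory Submission
  imports Defs
begin

text \<open>The symbol space is a countable product of finite discrete spaces, hence compact, Hausdorff
  and second countable. The gluing relation is closed, because failing to share a vertex in \<open>G\<^sub>n\<close>
  is decided by the first \<open>n + 1\<close> letters. It is transitive because in an expanding system no
  edge of \<open>R\<close> joins \<open>i\<close> and \<open>t\<close>, so an edge of \<open>G\<^sub>n\<^sub>+\<^sub>1\<close> that is not a loop has at most one
  endpoint already present in \<open>G\<^sub>n\<close>; hence the vertex that the edges of \<open>a\<close> and \<open>b\<close> share and the
  one that the edges of \<open>b\<close> and \<open>c\<close> share eventually coincide. A quotient of a compact Hausdorff
  space by a closed equivalence relation is compact Hausdorff and the quotient map is perfect,
  so second countability passes to the limit space, which is then metrizable by Urysohn's
  embedding into a countable product of unit intervals.\<close>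

section \<open>Quotients by closed equivalence relations\<close>

lemma istopology_quotient:
  "istopology (\<lambda>U. U \<subseteq> topspace X // r \<and> openin X {x \<in> topspace X. r `` {x} \<in> U})"
proof -
  define L where "L U \<longleftrightarrow> U \<subseteq> topspace X // r \<and> openin X {x \<in> topspace X. r `` {x} \<in> U}" for U
  have "L (S \<inter> T)" if "L S" "L T" for S T
  proof -
    have "{x \<in> topspace X. r `` {x} \<in> S \<inter> T} =
        {x \<in> topspace X. r `` {x} \<in> S} \<inter> {x \<in> topspace X. r `` {x} \<in> T}"
      by auto
    then show ?thesis
      using that by (auto simp: L_def)
  qed
  moreover have "L (\<Union>\<K>)" if "\<forall>S\<in>\<K>. L S" for \<K>
  proof -
    have "{x \<in> topspace X. r `` {x} \<in> \<Union>\<K>} = (\<Union>S\<in>\<K>. {x \<in> topspace X. r `` {x} \<in> S})"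
      by auto
    moreover have "openin X (\<Union>S\<in>\<K>. {x \<in> topspace X. r `` {x} \<in> S})"
      using that by (intro openin_Union) (auto simp: L_def)
    ultimately show ?thesis
      using that by (auto simp: L_def)
  qed
  ultimately show ?thesis
    unfolding istopology_def L_def[abs_def] by blast
qed

lemma openin_quotient_topology:
  "openin (quotient_topology X r) U \<longleftrightarrow>
     U \<subseteq> topspace X // r \<and> openin X {x \<in> topspace X. r `` {x} \<in> U}"
  unfolding quotient_topology_def using istopology_quotient[of X r] by simp

lemma topspace_quotient_topology: "topspace (quotient_topology X r) = topspace X // r"
proof -
  have "{x \<in> topspace X. r `` {x} \<in> topspace X // r} = topspace X"
    by (auto intro: quotientI)
  then have "openin (quotient_topology X r) (topspace X // r)"
    by (simp add: openin_quotient_topology)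
  then show ?thesis
    by (metis openin_quotient_topology openin_subset openin_topspace subset_antisym)
qed

lemma closedin_quotient_topology:
  "closedin (quotient_topology X r) K \<longleftrightarrow>
     K \<subseteq> topspace X // r \<and> closedin X {x \<in> topspace X. r `` {x} \<in> K}"
proof -
  have "{x \<in> topspace X. r `` {x} \<in> topspace X // r - K} =
          topspace X - {x \<in> topspace X. r `` {x} \<in> K}"
    by (auto intro: quotientI)
  then show ?thesis
    unfolding closedin_def topspace_quotient_topology openin_quotient_topology by auto
qed

lemma continuous_map_quotient_topology:
  "continuous_map X (quotient_topology X r) (\<lambda>x. r `` {x})"
  unfolding continuous_map_def topspace_quotient_topology
  by (auto intro: quotientI simp: openin_quotient_topology)

lemma closedin_Image_compact:
  assumes "compact_space X" "closedin (prod_topology X Y) r" "closedin X K"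
  shows "closedin Y (r `` K)"
proof -
  have "r `` K = snd ` (r \<inter> (K \<times> topspace Y))"
    using closedin_subset[OF assms(2)] by force
  moreover have "closedin (prod_topology X Y) (r \<inter> (K \<times> topspace Y))"
    using assms(2,3) by (intro closedin_Int) (auto simp: closedin_prod_Times_iff)
  ultimately show ?thesis
    using closed_map_snd[OF assms(1)] unfolding closed_map_def by metis
qed

lemma saturation_eq_Image:
  assumes r: "equiv A r" and K: "K \<subseteq> A"
  shows "{x \<in> A. r `` {x} \<in> (\<lambda>x. r `` {x}) ` K} = r `` K"
proof (intro set_eqI iffI)
  fix x assume "x \<in> {x \<in> A. r `` {x} \<in> (\<lambda>x. r `` {x}) ` K}"
  then obtain k where "x \<in> A" "k \<in> K" "r `` {x} = r `` {k}"
    by auto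
  then show "x \<in> r `` K"
    using eq_equiv_class_iff[OF r, of k x] K by auto
next
  fix x assume "x \<in> r `` K"
  then obtain k where "k \<in> K" "(k, x) \<in> r"
    by auto
  then show "x \<in> {x \<in> A. r `` {x} \<in> (\<lambda>x. r `` {x}) ` K}"
    using equiv_class_eq_iff[OF r, of k x] by auto
qed

lemma perfect_map_quotient_topology:
  assumes X: "compact_space X" "t1_space X"
    and r: "equiv (topspace X) r" "closedin (prod_topology X X) r"
  shows "perfect_map X (quotient_topology X r) (\<lambda>x. r `` {x})"
  unfolding perfect_map_def proper_map_def
proof (intro conjI ballI)
  show "continuous_map X (quotient_topology X r) (\<lambda>x. r `` {x})"
    by (rule continuous_map_quotient_topology)
  show "(\<lambda>x. r `` {x}) ` topspace X = topspace (quotient_topology X r)"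
    by (auto simp: topspace_quotient_topology quotient_def)
  show "closed_map X (quotient_topology X r) (\<lambda>x. r `` {x})"
    unfolding closed_map_def closedin_quotient_topology
  proof (intro allI impI conjI)
    fix K assume K: "closedin X K"
    then show "(\<lambda>x. r `` {x}) ` K \<subseteq> topspace X // r"
      using closedin_subset by (fastforce intro: quotientI)
    show "closedin X {x \<in> topspace X. r `` {x} \<in> (\<lambda>x. r `` {x}) ` K}"
      using closedin_Image_compact[OF X(1) r(2) K] saturation_eq_Image[OF r(1) closedin_subset[OF K]]
      by simp
  qed
  fix c assume "c \<in> topspace (quotient_topology X r)"
  then obtain a where a: "a \<in> topspace X" "c = r `` {a}"
    by (auto simp: topspace_quotient_topology quotient_def)
  have "{x \<in> topspace X. r `` {x} = c} = r `` {a}"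
    using saturation_eq_Image[OF r(1), of "{a}"] a by simp
  moreover have "closedin X (r `` {a})"
    using closedin_Image_compact[OF X(1) r(2)] closedin_t1_singleton[OF X(2) a(1)] .
  ultimately show "compactin X {x \<in> topspace X. r `` {x} = c}"
    by (simp add: X(1) closedin_compact_space)
qed

lemma compact_Hausdorff_quotient_topology:
  assumes X: "compact_space X" "Hausdorff_space X"
    and r: "equiv (topspace X) r" "closedin (prod_topology X X) r"
  shows "compact_space (quotient_topology X r) \<and> Hausdorff_space (quotient_topology X r)"
proof -
  have "perfect_map X (quotient_topology X r) (\<lambda>x. r `` {x})"
    using perfect_map_quotient_topology X(1) Hausdorff_imp_t1_space[OF X(2)] r .
  then have cont: "continuous_map X (quotient_topology X r) (\<lambda>x. r `` {x})"
    and closed: "closed_map X (quotient_topology X r) (\<lambda>x. r `` {x})"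
    and onto: "(\<lambda>x. r `` {x}) ` topspace X = topspace (quotient_topology X r)"
    by (auto simp: perfect_map_def proper_map_def)
  have "normal_space X"
    using X compact_Hausdorff_or_regular_imp_normal_space by blast
  then have "Hausdorff_space (quotient_topology X r)"
    using normal_Hausdorff_space_closed_continuous_map_image[OF _ X(2) closed cont onto] by blast
  moreover have "compact_space (quotient_topology X r)"
    using image_compactin[OF _ cont] X(1) onto by (metis compact_space_def)
  ultimately show ?thesis by blast
qed

lemma compactin_subset_finite_Union_base:
  assumes K: "compactin X K" "K \<subseteq> W" and W: "openin X W"
    and \<B>: "\<And>V. V \<in> \<B> \<Longrightarrow> openin X V"
      "\<And>U x. openin X U \<Longrightarrow> x \<in> U \<Longrightarrow> \<exists>V\<in>\<B>. x \<in> V \<and> V \<subseteq> U"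
  obtains \<A> where "finite \<A>" "\<A> \<subseteq> \<B>" "K \<subseteq> \<Union>\<A>" "\<Union>\<A> \<subseteq> W"
proof -
  have "K \<subseteq> \<Union>{V \<in> \<B>. V \<subseteq> W}"
  proof
    fix x assume "x \<in> K"
    then obtain V where "V \<in> \<B>" "x \<in> V" "V \<subseteq> W"
      using \<B>(2)[OF W] K(2) by blast
    then show "x \<in> \<Union>{V \<in> \<B>. V \<subseteq> W}" by blast
  qed
  moreover have "\<forall>V \<in> {V \<in> \<B>. V \<subseteq> W}. openin X V"
    using \<B>(1) by blast
  ultimately obtain \<A> where "finite \<A>" "\<A> \<subseteq> {V \<in> \<B>. V \<subseteq> W}" "K \<subseteq> \<Union>\<A>"
    using K(1) unfolding compactin_def by meson
  then show thesis
    using that by blast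
qed

text \<open>Basic open sets of the image are the complements of images of complements of finite
  unions of basic open sets; the compactness of the fibres makes them a base.\<close>
lemma second_countable_perfect_map_image:
  assumes f: "perfect_map X Y f" and X: "second_countable X"
  shows "second_countable Y"
proof -
  obtain \<B> where \<B>: "countable \<B>" "\<And>V. V \<in> \<B> \<Longrightarrow> openin X V"
    "\<And>U x. openin X U \<Longrightarrow> x \<in> U \<Longrightarrow> \<exists>V\<in>\<B>. x \<in> V \<and> V \<subseteq> U"
    using X unfolding second_countable_def by metis
  have contf: "continuous_map X Y f" and clf: "closed_map X Y f"
    and surj: "f ` topspace X = topspace Y"
    and fibre: "\<And>y. y \<in> topspace Y \<Longrightarrow> compactin X {x \<in> topspace X. f x = y}"
    using f by (auto simp: perfect_map_def proper_map_def)
  define V where "V \<A> = topspace Y - f ` (topspace X - \<Union>\<A>)" for \<A>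
  have opn: "openin Y (V \<A>)" if "\<A> \<subseteq> \<B>" for \<A>
  proof -
    have "closedin Y (f ` (topspace X - \<Union>\<A>))"
      using that \<B>(2) clf unfolding closed_map_def by blast
    then show ?thesis by (simp add: V_def openin_diff)
  qed
  have base: "\<exists>\<A>. finite \<A> \<and> \<A> \<subseteq> \<B> \<and> y \<in> V \<A> \<and> V \<A> \<subseteq> W"
    if W: "openin Y W" and y: "y \<in> W" for W y
  proof -
    have yY: "y \<in> topspace Y"
      using W y openin_subset by blast
    have "{x \<in> topspace X. f x = y} \<subseteq> {x \<in> topspace X. f x \<in> W}"
      using y by blast
    moreover have "openin X {x \<in> topspace X. f x \<in> W}"
      using openin_continuous_map_preimage[OF contf W] .
    ultimately obtain \<A> where \<A>: "finite \<A>" "\<A> \<subseteq> \<B>"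
        "{x \<in> topspace X. f x = y} \<subseteq> \<Union>\<A>" "\<Union>\<A> \<subseteq> {x \<in> topspace X. f x \<in> W}"
      by (rule compactin_subset_finite_Union_base[OF fibre[OF yY] _ _ \<B>(2,3)])
    have "y \<notin> f ` (topspace X - \<Union>\<A>)"
      using \<A>(3) by blast
    then have "y \<in> V \<A>"
      using yY by (simp add: V_def)
    moreover have "V \<A> \<subseteq> W"
    proof
      fix z assume z: "z \<in> V \<A>"
      then obtain x where x: "x \<in> topspace X" "z = f x"
        using surj by (auto simp: V_def)
      then have "x \<in> \<Union>\<A>"
        using z by (auto simp: V_def)
      then show "z \<in> W"
        using \<A>(4) x by blast
    qed
    ultimately show ?thesis
      using \<A>(1,2) by blast
  qed
  show ?thesis
    unfolding second_countable_def
  proof (intro exI[of _ "V ` {\<A>. finite \<A> \<and> \<A> \<subseteq> \<B>}"] conjI ballI allI impI)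
    show "countable (V ` {\<A>. finite \<A> \<and> \<A> \<subseteq> \<B>})"
      using \<B>(1) by (intro countable_image countable_Collect_finite_subset)
  next
    fix U assume "U \<in> V ` {\<A>. finite \<A> \<and> \<A> \<subseteq> \<B>}"
    then show "openin Y U"
      using opn by blast
  next
    fix W y assume "openin Y W \<and> y \<in> W"
    then obtain \<A> where "finite \<A>" "\<A> \<subseteq> \<B>" "y \<in> V \<A>" "V \<A> \<subseteq> W"
      using base by metis
    then show "\<exists>U\<in>V ` {\<A>. finite \<A> \<and> \<A> \<subseteq> \<B>}. y \<in> U \<and> U \<subseteq> W"
      by (intro bexI[of _ "V \<A>"]) auto
  qed
qed

lemma regular_t1_separation_by_base:
  assumes Y: "regular_space Y" "t1_space Y"
    and \<B>: "\<And>V. V \<in> \<B> \<Longrightarrow> openin Y V"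
      "\<And>U x. openin Y U \<Longrightarrow> x \<in> U \<Longrightarrow> \<exists>V\<in>\<B>. x \<in> V \<and> V \<subseteq> U"
    and y: "y1 \<in> topspace Y" "y2 \<in> topspace Y" "y1 \<noteq> y2"
  obtains U V where "U \<in> \<B>" "V \<in> \<B>" "y1 \<in> U" "Y closure_of U \<subseteq> V" "y2 \<notin> V"
proof -
  have "openin Y (topspace Y - {y2})"
    using openin_diff[OF openin_topspace closedin_t1_singleton[OF Y(2) y(2)]] .
  then obtain V where V: "V \<in> \<B>" "y1 \<in> V" "V \<subseteq> topspace Y - {y2}"
    using \<B>(2) y by blast
  have "closedin Y (topspace Y - V)"
    using \<B>(1)[OF V(1)] by blast
  then obtain W where W: "openin Y W" "y1 \<in> W" "disjnt (topspace Y - V) (Y closure_of W)"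
    using Y(1) V(2) y(1) unfolding regular_space by blast
  then have W': "Y closure_of W \<subseteq> V"
    using closure_of_subset_topspace[of Y W] by (auto simp: disjnt_def)
  obtain U where U: "U \<in> \<B>" "y1 \<in> U" "U \<subseteq> W"
    using \<B>(2)[OF W(1,2)] by blast
  have "Y closure_of U \<subseteq> V"
    using closure_of_mono[OF U(3), of Y] W' by blast
  then show thesis
    using that U(1,2) V(1,3) by blast
qed

text \<open>Urysohn: the functions that are 0 on the closure of a basic open set U and 1 off a basic
  open set V containing that closure separate points.\<close>
lemma normal_t1_second_countable_imp_inj_into_cube:
  fixes Y :: "'a topology"
  assumes N: "normal_space Y" "t1_space Y" and Y: "second_countable Y"
  obtains I :: "('a set \<times> 'a set) set" and \<Phi>
  where "countable I" "continuous_map Y (product_topology (\<lambda>_. top_of_set {0..1::real}) I) \<Phi>"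
    "inj_on \<Phi> (topspace Y)"
proof -
  obtain \<B> where \<B>: "countable \<B>" "\<And>V. V \<in> \<B> \<Longrightarrow> openin Y V"
    "\<And>U x. openin Y U \<Longrightarrow> x \<in> U \<Longrightarrow> \<exists>V\<in>\<B>. x \<in> V \<and> V \<subseteq> U"
    using Y unfolding second_countable_def by metis
  define I where "I = {(U, V) \<in> \<B> \<times> \<B>. Y closure_of U \<subseteq> V}"
  have "\<exists>g. continuous_map Y (top_of_set {0..1::real}) g \<and>
          g ` (Y closure_of fst q) \<subseteq> {0} \<and> g ` (topspace Y - snd q) \<subseteq> {1}" if "q \<in> I" for q
  proof (rule Urysohn_lemma[OF N(1) closedin_closure_of, where a=0 and b=1])
    show "closedin Y (topspace Y - snd q)"
      using that \<B>(2) by (auto simp: I_def)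
    show "disjnt (Y closure_of fst q) (topspace Y - snd q)"
      using that by (auto simp: I_def disjnt_def)
  qed auto
  then obtain g where g: "\<And>q. q \<in> I \<Longrightarrow> continuous_map Y (top_of_set {0..1::real}) (g q)"
    "\<And>q. q \<in> I \<Longrightarrow> g q ` (Y closure_of fst q) \<subseteq> {0}"
    "\<And>q. q \<in> I \<Longrightarrow> g q ` (topspace Y - snd q) \<subseteq> {1}"
    by metis
  define \<Phi> where "\<Phi> y = restrict (\<lambda>q. g q y) I" for y
  have "countable I"
    using countable_subset[of I "\<B> \<times> \<B>"] \<B>(1) by (auto simp: I_def)
  moreover have "continuous_map Y (product_topology (\<lambda>_. top_of_set {0..1::real}) I) \<Phi>"
    unfolding \<Phi>_def continuous_map_componentwise using g(1) by auto
  moreover have "inj_on \<Phi> (topspace Y)"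
  proof (rule inj_onI, rule ccontr)
    fix y1 y2 assume y: "y1 \<in> topspace Y" "y2 \<in> topspace Y" "\<Phi> y1 = \<Phi> y2" "y1 \<noteq> y2"
    obtain U V where UV: "U \<in> \<B>" "V \<in> \<B>" "y1 \<in> U" "Y closure_of U \<subseteq> V" "y2 \<notin> V"
      using regular_t1_separation_by_base[OF normal_t1_imp_regular_space[OF N] N(2) \<B>(2,3)] y
      by metis
    then have q: "(U, V) \<in> I"
      by (simp add: I_def)
    have "g (U, V) y1 = 0"
      using g(2)[OF q] UV(3) closure_of_subset[of U Y] \<B>(2)[OF UV(1)] openin_subset by fastforce
    moreover have "g (U, V) y2 = 1"
      using g(3)[OF q] UV(5) y(2) by auto
    moreover have "g (U, V) y1 = g (U, V) y2"
      using y(3) q unfolding \<Phi>_def by (metis restrict_apply')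
    ultimately show False by simp
  qed
  ultimately show thesis
    by (rule that)
qed

lemma metrizable_space_countable_cube:
  assumes "countable I"
  shows "metrizable_space (product_topology (\<lambda>_. top_of_set {0..1::real}) I)"
proof (rule metrizable_topology_D)
  have "restrict (\<lambda>_. 0) I \<in> topspace (product_topology (\<lambda>_. top_of_set {0..1::real}) I)"
    by simp
  then show "topspace (product_topology (\<lambda>_. top_of_set {0..1::real}) I) \<noteq> {}"
    by blast
  show "countable {i \<in> I. \<nexists>a. topspace (top_of_set {0..1::real}) \<subseteq> {a}}"
    using assms by (rule countable_subset[rotated]) auto
qed (simp add: metrizable_space_subtopology metrizable_space_euclidean)

lemma compact_Hausdorff_second_countable_imp_metrizable_space:
  fixes Y :: "'a topology"
  assumes "compact_space Y" "Hausdorff_space Y" "second_countable Y"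
  shows "metrizable_space Y"
proof -
  obtain I :: "('a set \<times> 'a set) set" and \<Phi>
    where I: "countable I" and \<Phi>: "continuous_map Y (product_topology (\<lambda>_. top_of_set {0..1::real}) I) \<Phi>"
      "inj_on \<Phi> (topspace Y)"
    using normal_t1_second_countable_imp_inj_into_cube assms
      compact_Hausdorff_or_regular_imp_normal_space Hausdorff_imp_t1_space by metis
  have "Hausdorff_space (product_topology (\<lambda>_. top_of_set {0..1::real}) I)"
    by (simp add: Hausdorff_space_product_topology Hausdorff_space_subtopology)
  then have "embedding_map Y (product_topology (\<lambda>_. top_of_set {0..1::real}) I) \<Phi>"
    using continuous_imp_embedding_map \<Phi> assms(1) by blast
  then show ?thesis
    using embedding_map_imp_homeomorphic_space homeomorphic_metrizable_space
      metrizable_space_subtopology metrizable_space_countable_cube[OF I] by blast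
qed

lemma compact_metrizable_quotient_topology:
  assumes X: "compact_space X" "Hausdorff_space X" "second_countable X"
    and r: "equiv (topspace X) r" "closedin (prod_topology X X) r"
  shows "compact_space (quotient_topology X r) \<and> metrizable_space (quotient_topology X r)"
proof -
  have "perfect_map X (quotient_topology X r) (\<lambda>x. r `` {x})"
    using perfect_map_quotient_topology X(1) Hausdorff_imp_t1_space[OF X(2)] r .
  then have "second_countable (quotient_topology X r)"
    using second_countable_perfect_map_image X(3) by blast
  then show ?thesis
    using compact_Hausdorff_quotient_topology[OF X(1,2) r]
      compact_Hausdorff_second_countable_imp_metrizable_space by blast
qed

section \<open>The symbol space\<close>

lemma topspace_symbol_space:
  "topspace (symbol_space G0 R) = arcs G0 \<times> {s. \<forall>k. s k \<in> arcs R}"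
  by (auto simp: symbol_space_def topspace_product_topology PiE_iff)

lemma compact_space_symbol_space:
  assumes "finite (arcs G0)" "finite (arcs R)"
  shows "compact_space (symbol_space G0 R)"
  using assms by (simp add: symbol_space_def compact_space_prod_topology
      compact_space_product_topology compact_space_discrete_topology)

lemma Hausdorff_space_symbol_space: "Hausdorff_space (symbol_space G0 R)"
  by (simp add: symbol_space_def Hausdorff_space_prod_topology Hausdorff_space_product_topology)

definition cylinder :: "('w,'f) pre_digraph \<Rightarrow> nat \<Rightarrow> 'e \<times> (nat \<Rightarrow> 'f) \<Rightarrow> ('e \<times> (nat \<Rightarrow> 'f)) set"
  where "cylinder R n b = {fst b} \<times> (\<Pi>\<^sub>E k\<in>UNIV. if k < n then {snd b k} else arcs R)"

lemma mem_cylinder_iff: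
  assumes "b \<in> topspace (symbol_space G0 R)"
  shows "c \<in> cylinder R n b \<longleftrightarrow>
           c \<in> topspace (symbol_space G0 R) \<and> fst c = fst b \<and> (\<forall>k<n. snd c k = snd b k)"
  using assms by (cases c) (auto simp: cylinder_def topspace_symbol_space PiE_iff)

lemma openin_cylinder:
  assumes b: "b \<in> topspace (symbol_space G0 R)"
  shows "openin (symbol_space G0 R) (cylinder R n b)"
proof -
  have "finite {k. (if k < n then {snd b k} else arcs R) \<noteq> arcs R}"
    by (rule finite_subset[of _ "{..<n}"]) auto
  then have "openin (product_topology (\<lambda>_. discrete_topology (arcs R)) UNIV)
               (\<Pi>\<^sub>E k\<in>UNIV. if k < n then {snd b k} else arcs R)"
    using b by (auto simp: openin_PiE_gen topspace_symbol_space)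
  moreover have "openin (discrete_topology (arcs G0)) {fst b}"
    using b by (auto simp: topspace_symbol_space)
  ultimately show ?thesis
    unfolding symbol_space_def cylinder_def openin_prod_Times_iff by blast
qed

lemma cylinder_subset_openin:
  assumes W: "openin (symbol_space G0 R) W" and a: "a \<in> W"
  obtains n where "cylinder R n a \<subseteq> W"
proof -
  obtain U V where UV: "openin (product_topology (\<lambda>_. discrete_topology (arcs R)) UNIV) V"
      "fst a \<in> U" "snd a \<in> V" "U \<times> V \<subseteq> W"
    using W a unfolding symbol_space_def openin_prod_topology_alt
    by (metis prod.collapse)
  then obtain Uf where Uf: "finite {k. Uf k \<noteq> arcs R}" "snd a \<in> Pi\<^sub>E UNIV Uf" "Pi\<^sub>E UNIV Uf \<subseteq> V"
    unfolding openin_product_topology_alt by auto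
  obtain n where n: "{k. Uf k \<noteq> arcs R} \<subseteq> {..<n}"
    using finite_nat_bounded[OF Uf(1)] by blast
  have aT: "a \<in> topspace (symbol_space G0 R)"
    using W a openin_subset by blast
  have snd_in: "snd c \<in> Pi\<^sub>E UNIV Uf" if c: "c \<in> cylinder R n a" for c
  proof -
    have "snd c k \<in> Uf k" for k
    proof (cases "k < n")
      case True
      then show ?thesis
        using c Uf(2) mem_cylinder_iff[OF aT] by (auto simp: PiE_iff)
    next
      case False
      then have "Uf k = arcs R" using n by auto
      then show ?thesis
        using c mem_cylinder_iff[OF aT] by (auto simp: topspace_symbol_space)
    qed
    then show ?thesis by (simp add: PiE_iff)
  qed
  have "cylinder R n a \<subseteq> U \<times> V"
  proof
    fix c assume c: "c \<in> cylinder R n a"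
    then have "fst c \<in> U"
      using mem_cylinder_iff[OF aT] UV(2) by simp
    moreover have "snd c \<in> V"
      using snd_in[OF c] Uf(3) by blast
    ultimately show "c \<in> U \<times> V"
      by (simp add: mem_Times_iff)
  qed
  then show thesis
    using UV(4) that by blast
qed

lemma second_countable_symbol_space:
  fixes G0 :: "('v,'e) pre_digraph" and R :: "('w,'f) pre_digraph"
  assumes "countable (arcs G0)" "countable (arcs R)"
  shows "second_countable (symbol_space G0 R)"
proof -
  define M :: "'e \<times> 'f list \<Rightarrow> ('e \<times> (nat \<Rightarrow> 'f)) set"
    where "M = (\<lambda>(e, ws). {e} \<times> (\<Pi>\<^sub>E k\<in>UNIV. if k < length ws then {ws ! k} else arcs R))"
  define \<C> where "\<C> = {cylinder R n b | n b. b \<in> topspace (symbol_space G0 R)}"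
  have "\<C> \<subseteq> M ` (arcs G0 \<times> lists (arcs R))"
  proof
    fix C assume "C \<in> \<C>"
    then obtain n b where b: "b \<in> topspace (symbol_space G0 R)" "C = cylinder R n b"
      unfolding \<C>_def by blast
    have "(\<lambda>k. if k < n then {snd b k} else arcs R) =
        (\<lambda>k. if k < length (map (snd b) [0..<n]) then {map (snd b) [0..<n] ! k} else arcs R)"
      by (auto intro!: ext)
    then have "C = M (fst b, map (snd b) [0..<n])"
      by (simp add: b(2) M_def cylinder_def)
    moreover have "(fst b, map (snd b) [0..<n]) \<in> arcs G0 \<times> lists (arcs R)"
      using b(1) by (auto simp: topspace_symbol_space)
    ultimately show "C \<in> M ` (arcs G0 \<times> lists (arcs R))" by blast
  qed
  moreover have "countable (M ` (arcs G0 \<times> lists (arcs R)))"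
    using assms by (intro countable_image countable_SIGMA countable_lists)
  ultimately have "countable \<C>"
    by (rule countable_subset)
  moreover have "openin (symbol_space G0 R) C" if "C \<in> \<C>" for C
    using that openin_cylinder unfolding \<C>_def by blast
  moreover have "\<exists>C\<in>\<C>. a \<in> C \<and> C \<subseteq> W"
    if W: "openin (symbol_space G0 R) W" and a: "a \<in> W" for W a
  proof -
    obtain n where "cylinder R n a \<subseteq> W"
      using cylinder_subset_openin[OF W a] .
    moreover have aT: "a \<in> topspace (symbol_space G0 R)"
      using W a openin_subset by blast
    moreover have "a \<in> cylinder R n a"
      using mem_cylinder_iff[OF aT] aT by simp
    moreover have "cylinder R n a \<in> \<C>"
      unfolding \<C>_def using aT by blast
    ultimately show ?thesis
      by blast
  qed
  ultimately show ?thesis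
    unfolding second_countable_def by blast
qed

section \<open>The gluing relation\<close>

text \<open>A vertex created when an edge of \<open>G\<^sub>j\<close> is replaced first appears in \<open>G\<^sub>j\<^sub>+\<^sub>1\<close>.\<close>
fun vertex_level :: "('v,'e,'w,'f) xvert \<Rightarrow> nat" where
  "vertex_level (Base v) = 0"
| "vertex_level (New p x) = Suc (length (snd p))"

definition prefix_vertices ::
  "('v,'e) pre_digraph \<Rightarrow> ('w,'f) pre_digraph \<Rightarrow> 'w \<Rightarrow> 'w \<Rightarrow> 'e \<times> (nat \<Rightarrow> 'f) \<Rightarrow> nat
     \<Rightarrow> ('v,'e,'w,'f) xvert set" where
  "prefix_vertices G0 R i t a n = edge_vertices G0 R i t (fst a) (map (snd a) [0..<n])"

lemma prefix_vertices_0: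
  "prefix_vertices G0 R i t a 0 = {Base (tail G0 (fst a)), Base (head G0 (fst a))}"
  by (simp add: prefix_vertices_def edge_vertices_def)

lemma prefix_vertices_Suc:
  "prefix_vertices G0 R i t a (Suc n) =
    (let p = ends_rev G0 R i t (fst a) (rev (map (snd a) [0..<n]));
         f = (\<lambda>x. if x = i then fst p else if x = t then snd p
                  else New (fst a, map (snd a) [0..<n]) x)
     in {f (tail R (snd a n)), f (head R (snd a n))})"
  by (simp add: prefix_vertices_def edge_vertices_def Let_def)

lemma prefix_vertices_nonempty: "prefix_vertices G0 R i t a n \<noteq> {}"
  by (simp add: prefix_vertices_def edge_vertices_def Let_def)

lemma prefix_vertices_Suc_subset:
  "prefix_vertices G0 R i t a (Suc n) \<subseteq>
     prefix_vertices G0 R i t a n \<union> range (New (fst a, map (snd a) [0..<n]))"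
  unfolding prefix_vertices_Suc Let_def
  by (auto simp: prefix_vertices_def edge_vertices_def Let_def)

lemma vertex_level_le:
  "u \<in> prefix_vertices G0 R i t a n \<Longrightarrow> vertex_level u \<le> n"
proof (induction n arbitrary: u)
  case 0
  then show ?case by (auto simp: prefix_vertices_0)
next
  case (Suc n)
  then show ?case
    using prefix_vertices_Suc_subset[of G0 R i t a n] by (fastforce dest: Suc.IH)
qed

lemma prefix_vertices_le_cases:
  assumes "n \<le> m" "u \<in> prefix_vertices G0 R i t a m"
  shows "u \<in> prefix_vertices G0 R i t a n \<or>
           (\<exists>j x. n \<le> j \<and> j < m \<and> u = New (fst a, map (snd a) [0..<j]) x)"
  using assms
proof (induction m arbitrary: u)
  case 0
  then show ?case by simp
next
  case (Suc m)
  show ?case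
  proof (cases "n = Suc m")
    case False
    then have "n \<le> m" using Suc.prems by simp
    then show ?thesis
      using prefix_vertices_Suc_subset[of G0 R i t a m] Suc.prems(2) Suc.IH less_SucI by blast
  qed (use Suc.prems in simp)
qed

lemma prefix_vertices_cong:
  assumes "fst a = fst b" "\<And>k. k < n \<Longrightarrow> snd a k = snd b k"
  shows "prefix_vertices G0 R i t a n = prefix_vertices G0 R i t b n"
  unfolding prefix_vertices_def using assms by (metis atLeastLessThan_iff map_eq_conv set_upt)

lemma New_prefix_eq:
  assumes "New (e, map s [0..<j]) x = New (e', map s' [0..<j']) x'"
  shows "e = e' \<and> j = j' \<and> (\<forall>k<j. s k = s' k)"
proof -
  have m: "map s [0..<j] = map s' [0..<j']" and "e = e'"
    using assms by auto
  moreover have "j = j'"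
    using arg_cong[OF m, of length] by simp
  moreover have "s k = s' k" if "k < j" for k
    using that nth_map_upt[of k j 0 s] nth_map_upt[of k j' 0 s'] m \<open>j = j'\<close> by simp
  ultimately show ?thesis by blast
qed

lemma prefix_vertices_eq_if_shared_new:
  assumes "n \<le> m" "u \<in> prefix_vertices G0 R i t a m" "u \<in> prefix_vertices G0 R i t b m"
    and "u \<notin> prefix_vertices G0 R i t a n"
  shows "prefix_vertices G0 R i t a n = prefix_vertices G0 R i t b n"
proof -
  obtain j x where j: "n \<le> j" "u = New (fst a, map (snd a) [0..<j]) x"
    using prefix_vertices_le_cases[OF assms(1,2)] assms(4) by blast
  then have "u \<notin> prefix_vertices G0 R i t b n"
    using vertex_level_le by fastforce
  then obtain j' x' where "u = New (fst b, map (snd b) [0..<j']) x'"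
    using prefix_vertices_le_cases[OF assms(1,3)] by blast
  then have "fst a = fst b" "\<forall>k<j. snd a k = snd b k"
    using New_prefix_eq j(2) by metis+
  then show ?thesis
    using j(1) by (intro prefix_vertices_cong) auto
qed

text \<open>Once the edges of two symbols share a vertex, so do all their ancestors: a shared vertex
  that is not yet present in \<open>G\<^sub>n\<close> lies inside a common ancestor in \<open>G\<^sub>n\<close>.\<close>
lemma prefix_vertices_meet_le:
  assumes "prefix_vertices G0 R i t a m \<inter> prefix_vertices G0 R i t b m \<noteq> {}" "n \<le> m"
  shows "prefix_vertices G0 R i t a n \<inter> prefix_vertices G0 R i t b n \<noteq> {}"
proof -
  obtain u where u: "u \<in> prefix_vertices G0 R i t a m" "u \<in> prefix_vertices G0 R i t b m"
    using assms(1) by blast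
  consider "u \<in> prefix_vertices G0 R i t a n" "u \<in> prefix_vertices G0 R i t b n"
    | "prefix_vertices G0 R i t a n = prefix_vertices G0 R i t b n"
    using prefix_vertices_eq_if_shared_new[OF assms(2) u]
      prefix_vertices_eq_if_shared_new[OF assms(2) u(2,1)] by metis
  then show ?thesis
  proof cases
    case 1
    then show ?thesis by blast
  next
    case 2
    then show ?thesis
      using prefix_vertices_nonempty by (metis inf.idem)
  qed
qed

text \<open>This is where expansion enters: since no edge of \<open>R\<close> joins \<open>i\<close> and \<open>t\<close>, every edge of
  \<open>G\<^sub>J\<^sub>+\<^sub>1\<close> that is not a loop has an endpoint of level \<open>J + 1\<close>.\<close>
lemma prefix_vertices_low_level_unique:
  assumes no_it: "\<forall>z\<in>arcs R. \<not> ((tail R z = i \<and> head R z = t) \<or> (tail R z = t \<and> head R z = i))"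
    and a: "snd a J \<in> arcs R" and "J < m"
    and u: "u \<in> prefix_vertices G0 R i t a m" "vertex_level u \<le> J"
    and u': "u' \<in> prefix_vertices G0 R i t a m" "vertex_level u' \<le> J"
  shows "u = u'"
proof (rule ccontr)
  assume "u \<noteq> u'"
  have SJ: "Suc J \<le> m" using \<open>J < m\<close> by simp
  have uJ: "u \<in> prefix_vertices G0 R i t a (Suc J)" "u' \<in> prefix_vertices G0 R i t a (Suc J)"
    using prefix_vertices_le_cases[OF SJ u(1)] prefix_vertices_le_cases[OF SJ u'(1)] u(2) u'(2)
    by auto
  define p where "p = ends_rev G0 R i t (fst a) (rev (map (snd a) [0..<J]))"
  define f where "f x = (if x = i then fst p else if x = t then snd p
                         else New (fst a, map (snd a) [0..<J]) x)" for x
  have "prefix_vertices G0 R i t a (Suc J) = {f (tail R (snd a J)), f (head R (snd a J))}"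
    unfolding prefix_vertices_Suc Let_def p_def f_def by simp
  then have "{u, u'} = {f (tail R (snd a J)), f (head R (snd a J))}"
    using \<open>u \<noteq> u'\<close> uJ by auto
  moreover have "x = i \<or> x = t" if "vertex_level (f x) \<le> J" for x
    using that by (auto simp: f_def split: if_splits)
  ultimately have "tail R (snd a J) \<in> {i, t}" "head R (snd a J) \<in> {i, t}"
    "tail R (snd a J) \<noteq> head R (snd a J)"
    using u(2) u'(2) \<open>u \<noteq> u'\<close> by (auto simp: doubleton_eq_iff)
  then show False
    using no_it a by auto
qed

lemma shared_vertex_level_le:
  assumes "\<not> (fst a = fst b \<and> (\<forall>k<j. snd a k = snd b k))" "j \<le> m"
    and "u \<in> prefix_vertices G0 R i t a m" "u \<in> prefix_vertices G0 R i t b m"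
  shows "vertex_level u \<le> j"
proof (rule ccontr)
  assume "\<not> vertex_level u \<le> j"
  then obtain ja x jb x' where "j \<le> ja" "u = New (fst a, map (snd a) [0..<ja]) x"
      "u = New (fst b, map (snd b) [0..<jb]) x'"
    using prefix_vertices_le_cases[OF assms(2,3)] prefix_vertices_le_cases[OF assms(2,4)]
      vertex_level_le by metis
  then show False
    using New_prefix_eq[of "fst a" "snd a" ja x "fst b" "snd b" jb x'] assms(1) by auto
qed

lemma ex_prefix_differs:
  fixes a b :: "'e \<times> (nat \<Rightarrow> 'f)"
  assumes "a \<noteq> b"
  obtains j where "\<not> (fst a = fst b \<and> (\<forall>k<j. snd a k = snd b k))"
proof (cases "fst a = fst b")
  case True
  then obtain k where "snd a k \<noteq> snd b k"
    using assms by (metis prod.expand ext)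
  then show thesis
    using that[of "Suc k"] by auto
qed (use that in blast)

text \<open>If \<open>a \<noteq> b \<noteq> c\<close>, the vertices shared by \<open>a, b\<close> and by \<open>b, c\<close> at a late level both have
  low level, so they are the same endpoint of the edge of \<open>b\<close>.\<close>
lemma prefix_vertices_meet_trans:
  assumes no_it: "\<forall>z\<in>arcs R. \<not> ((tail R z = i \<and> head R z = t) \<or> (tail R z = t \<and> head R z = i))"
    and b: "\<And>k. snd b k \<in> arcs R"
    and ab: "\<And>n. prefix_vertices G0 R i t a n \<inter> prefix_vertices G0 R i t b n \<noteq> {}"
    and bc: "\<And>n. prefix_vertices G0 R i t b n \<inter> prefix_vertices G0 R i t c n \<noteq> {}"
  shows "prefix_vertices G0 R i t a n \<inter> prefix_vertices G0 R i t c n \<noteq> {}"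
proof (cases "a = b \<or> b = c")
  case True
  then show ?thesis using ab bc by blast
next
  case False
  then obtain j1 j2 where j1: "\<not> (fst a = fst b \<and> (\<forall>k<j1. snd a k = snd b k))"
    and j2: "\<not> (fst b = fst c \<and> (\<forall>k<j2. snd b k = snd c k))"
    using ex_prefix_differs by metis
  define J where "J = max j1 j2"
  define m where "m = max n (Suc J)"
  obtain u where u: "u \<in> prefix_vertices G0 R i t a m" "u \<in> prefix_vertices G0 R i t b m"
    using ab[of m] by blast
  obtain u' where u': "u' \<in> prefix_vertices G0 R i t b m" "u' \<in> prefix_vertices G0 R i t c m"
    using bc[of m] by blast
  have "j1 \<le> m" "j2 \<le> m"
    by (simp_all add: m_def J_def)
  then have "vertex_level u \<le> j1" "vertex_level u' \<le> j2"
    using shared_vertex_level_le[OF j1 _ u] shared_vertex_level_le[OF j2 _ u'] by auto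
  then have "vertex_level u \<le> J" "vertex_level u' \<le> J"
    by (simp_all add: J_def)
  then have "u = u'"
    using prefix_vertices_low_level_unique[OF no_it b, of J m u G0 u'] u(2) u'(1)
    by (simp add: m_def)
  then have "prefix_vertices G0 R i t a m \<inter> prefix_vertices G0 R i t c m \<noteq> {}"
    using u u' by blast
  then show ?thesis
    by (rule prefix_vertices_meet_le) (simp add: m_def)
qed

lemma prefix_vertices_cylinder:
  assumes "a \<in> topspace (symbol_space G0 R)" "a' \<in> cylinder R n a"
  shows "prefix_vertices G0 R i t a' n = prefix_vertices G0 R i t a n"
  using assms mem_cylinder_iff[OF assms(1)] by (intro prefix_vertices_cong) auto

lemma gluing_rel_iff:
  "(a, b) \<in> gluing_rel G0 R i t \<longleftrightarrow>
     a \<in> topspace (symbol_space G0 R) \<and> b \<in> topspace (symbol_space G0 R) \<and>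
     (\<forall>n. prefix_vertices G0 R i t a n \<inter> prefix_vertices G0 R i t b n \<noteq> {})"
  by (simp add: gluing_rel_def prefix_vertices_def)

lemma closedin_gluing_rel:
  "closedin (prod_topology (symbol_space G0 R) (symbol_space G0 R)) (gluing_rel G0 R i t)"
proof -
  let ?S = "symbol_space G0 R"
  let ?C = "topspace (prod_topology ?S ?S) - gluing_rel G0 R i t"
  have "\<exists>T. openin (prod_topology ?S ?S) T \<and> x \<in> T \<and> T \<subseteq> ?C" if x: "x \<in> ?C" for x
  proof -
    obtain a b where ab: "x = (a, b)" "a \<in> topspace ?S" "b \<in> topspace ?S"
      using x by auto
    have "(a, b) \<notin> gluing_rel G0 R i t"
      using x ab(1) by simp
    then obtain n where n: "prefix_vertices G0 R i t a n \<inter> prefix_vertices G0 R i t b n = {}"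
      using ab(2,3) by (auto simp: gluing_rel_iff)
    have "cylinder R n a \<times> cylinder R n b \<subseteq> ?C"
    proof clarify
      fix a' b' assume a': "a' \<in> cylinder R n a" and b': "b' \<in> cylinder R n b"
      have "prefix_vertices G0 R i t a' n \<inter> prefix_vertices G0 R i t b' n = {}"
        using n prefix_vertices_cylinder[OF ab(2) a'] prefix_vertices_cylinder[OF ab(3) b'] by simp
      then have "(a', b') \<notin> gluing_rel G0 R i t"
        by (auto simp: gluing_rel_iff)
      moreover have "a' \<in> topspace ?S" "b' \<in> topspace ?S"
        using a' b' mem_cylinder_iff[OF ab(2)] mem_cylinder_iff[OF ab(3)] by blast+
      ultimately show "(a', b') \<in> ?C"
        by simp
    qed
    moreover have "openin (prod_topology ?S ?S) (cylinder R n a \<times> cylinder R n b)"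
      using openin_cylinder[OF ab(2)] openin_cylinder[OF ab(3)] by (simp add: openin_prod_Times_iff)
    moreover have "x \<in> cylinder R n a \<times> cylinder R n b"
      using ab mem_cylinder_iff[OF ab(2)] mem_cylinder_iff[OF ab(3)] by simp
    ultimately show ?thesis
      by blast
  qed
  then have "openin (prod_topology ?S ?S) ?C"
    by (subst openin_subopen) blast
  moreover have "gluing_rel G0 R i t \<subseteq> topspace (prod_topology ?S ?S)"
    by (auto simp: gluing_rel_def)
  ultimately show ?thesis
    by (simp add: closedin_def)
qed

lemma equiv_gluing_rel:
  assumes no_it: "\<forall>z\<in>arcs R. \<not> ((tail R z = i \<and> head R z = t) \<or> (tail R z = t \<and> head R z = i))"
  shows "equiv (topspace (symbol_space G0 R)) (gluing_rel G0 R i t)"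
  unfolding equiv_def refl_on_def sym_def trans_def
proof (intro conjI allI impI ballI)
  show "gluing_rel G0 R i t \<subseteq> topspace (symbol_space G0 R) \<times> topspace (symbol_space G0 R)"
    by (auto simp: gluing_rel_def)
  show "(a, a) \<in> gluing_rel G0 R i t" if "a \<in> topspace (symbol_space G0 R)" for a
    using that by (simp add: gluing_rel_iff prefix_vertices_nonempty)
  show "(b, a) \<in> gluing_rel G0 R i t" if "(a, b) \<in> gluing_rel G0 R i t" for a b
    using that by (simp add: gluing_rel_iff inf_commute)
  fix a b c assume ab: "(a, b) \<in> gluing_rel G0 R i t" and bc: "(b, c) \<in> gluing_rel G0 R i t"
  have b: "snd b k \<in> arcs R" for k
    using ab by (auto simp: gluing_rel_iff topspace_symbol_space)
  have "\<forall>n. prefix_vertices G0 R i t a n \<inter> prefix_vertices G0 R i t b n \<noteq> {}"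
    "\<forall>n. prefix_vertices G0 R i t b n \<inter> prefix_vertices G0 R i t c n \<noteq> {}"
    using ab bc by (simp_all add: gluing_rel_iff)
  then have "prefix_vertices G0 R i t a n \<inter> prefix_vertices G0 R i t c n \<noteq> {}" for n
    using prefix_vertices_meet_trans[OF no_it b] by blast
  then show "(a, c) \<in> gluing_rel G0 R i t"
    using ab bc by (simp add: gluing_rel_iff)
qed

theorem theorem1p24:
  fixes G0 :: "('v,'e) pre_digraph" and R :: "('w,'f) pre_digraph" and i t :: 'w
  assumes "expanding G0 R i t"
  shows "compact_space (limit_space G0 R i t) \<and> metrizable_space (limit_space G0 R i t)"
proof -
  have fin: "finite (arcs G0)" "finite (arcs R)"
    and no_it: "\<forall>z\<in>arcs R. \<not> ((tail R z = i \<and> head R z = t) \<or> (tail R z = t \<and> head R z = i))"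
    using assms fin_digraph.finite_arcs unfolding expanding_def replacement_system_def by blast+
  have "compact_space (symbol_space G0 R)"
    using compact_space_symbol_space fin .
  moreover have "second_countable (symbol_space G0 R)"
    using second_countable_symbol_space countable_finite[OF fin(1)] countable_finite[OF fin(2)] .
  ultimately show ?thesis
    unfolding limit_space_def
    by (rule compact_metrizable_quotient_topology[OF _ Hausdorff_space_symbol_space _
          equiv_gluing_rel[OF no_it] closedin_gluing_rel])
qed

end
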